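(* Let $\theta>\kappa>0$ and $\eta_t=1/(\kappa t+2\theta)$. Let $p\in\mathcal X$ be fixed. Let $(\pi^t)_{t\ge0}$ be $\mathcal X$-valued random variables adapted to a filtration $(\mathcal F_t)_{t\ge0}$, i.e. $\pi^t$ is $\mathcal F_t$-measurable. Let $\xi_i^t\in\mathbb R^{d_i}$ be random vectors with $\mathbb E[\xi_i^t\mid\mathcal F_t]=0$ and $\mathbb E[\|\xi_i^t\|^2\mid\mathcal F_t]\le C^2$ for all $i\in[N]$ and $t\ge0$. Suppose that for all $t\ge0$, almost surely, $$D_\psi(p,\pi^{t+1})-D_\psi(p,\pi^t)+D_\psi(\pi^{t+1},\pi^t)\le\eta_t\big(\theta D_\psi(\pi^{t+1},\pi^t)-\kappa D_\psi(p,\pi^t)\big)+\eta_t\sum_{i=1}^N\langle\xi_i^t,\pi_i^{t+1}-p_i\rangle.$$ Then for all $t\ge0$, $$\mathbb E[D_\psi(p,\pi^{t+1})]\le\frac{2\theta-\kappa}{\kappa t+2\theta}D_\psi(p,\pi^0)+\frac{NC^2}{\rho(\kappa t+2\theta)}\Big(\frac1\kappa\log\Big(\frac\kappa{2\theta}t+1\Big)+\frac1{2\theta}\Big).$$ (In the paper, $p=\pi^{\mu,\sigma}$.)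
   Context: For each $i\in[N]$, $\mathcal X_i\subseteq\mathbb R^{d_i}$ is a nonempty compact convex set, and $\mathcal X=\prod_i\mathcal X_i$. The norm is Euclidean, with $\|\pi\|^2=\sum_i\|\pi_i\|^2$. Regularizer. $\psi:\mathcal X_i\to\mathbb R$ is differentiable and $\rho$-strongly convex with respect to $\|\cdot\|$ ($\rho>0$). Bregman divergence: $D_\psi(x,y)=\psi(x)-\psi(y)-\langle\nabla\psi(y),x-y\rangle$, and $D_\psi(\pi,\pi')=\sum_iD_\psi(\pi_i,\pi_i')$. Here $\pi^0$ is deterministic. *)

theory Defs
  imports "HOL-Probability.Probability"
begin

definition bregman :: "('a::real_inner \<Rightarrow> real) \<Rightarrow> ('a \<Rightarrow> 'a) \<Rightarrow> 'a \<Rightarrow> 'a \<Rightarrow> real" where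
  "bregman psi g x y = psi x - psi y - inner (g y) (x - y)"

definition bregman_prod ::
  "nat \<Rightarrow> (nat \<Rightarrow> 'a::real_inner \<Rightarrow> real) \<Rightarrow> (nat \<Rightarrow> 'a \<Rightarrow> 'a) \<Rightarrow> (nat \<Rightarrow> 'a) \<Rightarrow> (nat \<Rightarrow> 'a) \<Rightarrow> real" where
  "bregman_prod N psi g x y = (\<Sum>i<N. bregman (psi i) (g i) (x i) (y i))"

definition strongly_convex_on_wrt :: "real \<Rightarrow> 'a::real_normed_vector set \<Rightarrow> ('a \<Rightarrow> real) \<Rightarrow> bool" where
  "strongly_convex_on_wrt rho S f \<longleftrightarrow>
     (\<forall>x\<in>S. \<forall>y\<in>S. \<forall>u::real. 0 \<le> u \<and> u \<le> 1 \<longrightarrow>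
        f (u *\<^sub>R x + (1 - u) *\<^sub>R y) \<le> u * f x + (1 - u) * f y - rho / 2 * u * (1 - u) * (norm (x - y))\<^sup>2)"

end

theory Submission
  imports Defs
begin

text \<open>Write \<open>D t = D_psi(p, pi t)\<close> and \<open>a t = kappa t + 2 theta\<close>. Strong convexity makes
  \<open>D_psi(pi (t+1), pi t)\<close> dominate \<open>rho/2 |pi (t+1) - pi t|^2\<close>. Splitting the noise term
  \<open><xi, pi (t+1) - p>\<close> at \<open>pi t\<close> and bounding \<open><xi, pi (t+1) - pi t>\<close> by Young's inequality, this
  Bregman term absorbs both that part and the \<open>theta\<close>-term (as \<open>theta / a t \<le> 1/2\<close>), leaving pathwise
  \<open>D (t+1) \<le> (1 - kappa / a t) D t + |xi|^2 / (rho a t^2) + <xi, pi t - p> / a t\<close>.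
  Since \<open>pi t\<close> is \<open>F t\<close>-measurable and bounded, the last term has mean zero, and the middle one has
  mean at most \<open>N C^2 / (rho a t^2)\<close>. After taking expectations and multiplying by \<open>a t\<close> the
  recursion telescopes, and the remaining sum of \<open>1 / a r\<close> is bounded by a logarithm.\<close>

lemma bregman_ge_half_sq_norm:
  fixes f :: "'a::real_inner \<Rightarrow> real"
  assumes S: "convex S" and x: "x \<in> S" and y: "y \<in> S"
    and der: "(f has_derivative inner (g y)) (at y within S)"
    and sc: "strongly_convex_on_wrt rho S f"
  shows "rho / 2 * (norm (x - y))\<^sup>2 \<le> bregman f g x y"
proof -
  define d where "d = x - y"
  define q where "q = (\<lambda>u::real. f (y + u *\<^sub>R d))"
  have segment: "(\<lambda>u. y + u *\<^sub>R d) ` {0..1} \<subseteq> S"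
  proof clarify
    fix u :: real assume "u \<in> {0..1}"
    moreover have "y + u *\<^sub>R d = u *\<^sub>R x + (1 - u) *\<^sub>R y" by (simp add: d_def algebra_simps)
    ultimately show "y + u *\<^sub>R d \<in> S" using S x y by (simp add: convex_def)
  qed
  have "((\<lambda>u. y + u *\<^sub>R d) has_derivative (\<lambda>u. u *\<^sub>R d)) (at 0 within {0..1})"
    by (auto intro!: derivative_eq_intros)
  moreover have "(f has_derivative inner (g y)) (at ((\<lambda>u. y + u *\<^sub>R d) 0) within (\<lambda>u. y + u *\<^sub>R d) ` {0..1})"
    using has_derivative_subset[OF der segment] by simp
  ultimately have "(f \<circ> (\<lambda>u. y + u *\<^sub>R d) has_derivative inner (g y) \<circ> (\<lambda>u. u *\<^sub>R d)) (at 0 within {0..1})"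
    by (rule diff_chain_within)
  then have "(q has_field_derivative inner (g y) d) (at 0 within {0..1})"
    by (simp add: q_def o_def has_field_derivative_def mult.commute[of _ "inner (g y) d"])
  then have "((\<lambda>u. (q u - q 0) / (u - 0)) \<longlongrightarrow> inner (g y) d) (at_right 0)"
    unfolding has_field_derivative_iff at_within_Icc_at_right[OF zero_less_one] .
  moreover have "((\<lambda>u. f x - f y - rho / 2 * (1 - u) * (norm d)\<^sup>2)
      \<longlongrightarrow> f x - f y - rho / 2 * (1 - 0) * (norm d)\<^sup>2) (at_right 0)"
    by (intro tendsto_intros)
  \<comment> \<open>Strong convexity on the segment from y to x bounds every difference quotient of f.\<close>
  moreover have "\<forall>\<^sub>F u in at_right 0. (q u - q 0) / (u - 0) \<le> f x - f y - rho / 2 * (1 - u) * (norm d)\<^sup>2"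
    unfolding eventually_at_right_field
  proof (intro exI[of _ 1] conjI allI impI)
    fix u :: real assume u: "0 < u" "u < 1"
    have "f (u *\<^sub>R x + (1 - u) *\<^sub>R y) \<le> u * f x + (1 - u) * f y - rho / 2 * u * (1 - u) * (norm d)\<^sup>2"
      using sc x y u unfolding strongly_convex_on_wrt_def d_def by auto
    moreover have "u *\<^sub>R x + (1 - u) *\<^sub>R y = y + u *\<^sub>R d" by (simp add: d_def algebra_simps)
    ultimately have "q u - q 0 \<le> u * (f x - f y - rho / 2 * (1 - u) * (norm d)\<^sup>2)"
      by (simp add: q_def algebra_simps)
    with u show "(q u - q 0) / (u - 0) \<le> f x - f y - rho / 2 * (1 - u) * (norm d)\<^sup>2"
      by (simp add: divide_le_eq mult.commute)
  qed simp
  ultimately have "inner (g y) d \<le> f x - f y - rho / 2 * (1 - 0) * (norm d)\<^sup>2"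
    by (intro tendsto_le[OF trivial_limit_at_right_real])
  then show ?thesis by (simp add: bregman_def d_def)
qed

lemma bregman_prod_ge_sum_sq_norm:
  assumes "\<And>i. i < N \<Longrightarrow> convex (X i)"
    and "\<And>i. i < N \<Longrightarrow> x i \<in> X i" and "\<And>i. i < N \<Longrightarrow> y i \<in> X i"
    and "\<And>i. i < N \<Longrightarrow> (psi i has_derivative inner (g i (y i))) (at (y i) within X i)"
    and "\<And>i. i < N \<Longrightarrow> strongly_convex_on_wrt rho (X i) (psi i)"
  shows "(\<Sum>i<N. rho / 2 * (norm (x i - y i))\<^sup>2) \<le> bregman_prod N psi g x y"
  unfolding bregman_prod_def
proof (rule sum_mono)
  fix i assume "i \<in> {..<N}"
  with assms show "rho / 2 * (norm (x i - y i))\<^sup>2 \<le> bregman (psi i) (g i) (x i) (y i)"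
    by (intro bregman_ge_half_sq_norm[where S = "X i"]) auto
qed

lemma scaled_inner_le_young:
  fixes v w :: "'a::real_inner"
  assumes "rho > 0"
  shows "e * inner v w \<le> rho / 4 * (norm w)\<^sup>2 + e\<^sup>2 * (norm v)\<^sup>2 / rho"
proof -
  have "e * inner v w \<le> \<bar>e\<bar> * \<bar>inner v w\<bar>"
    by (metis abs_ge_self abs_mult)
  also have "\<dots> \<le> \<bar>e\<bar> * norm v * norm w"
    using Cauchy_Schwarz_ineq2[of v w] by (simp add: mult_left_mono mult.assoc)
  also have "rho * (\<bar>e\<bar> * norm v * norm w) \<le> rho * (rho / 4 * (norm w)\<^sup>2 + e\<^sup>2 * (norm v)\<^sup>2 / rho)"
  proof -
    have "0 \<le> (\<bar>e\<bar> * norm v - rho / 2 * norm w)\<^sup>2" by simp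
    with assms show ?thesis by (simp add: power2_eq_square algebra_simps)
  qed
  then have "\<bar>e\<bar> * norm v * norm w \<le> rho / 4 * (norm w)\<^sup>2 + e\<^sup>2 * (norm v)\<^sup>2 / rho"
    using assms by simp
  finally show ?thesis .
qed

lemma bregman_step_contraction:
  fixes Dx Dy B eta theta kappa rho :: real and x y p \<xi> :: "nat \<Rightarrow> 'a::real_inner"
  assumes rho: "rho > 0" and eta: "eta \<ge> 0" "eta * theta \<le> 1 / 2"
    and B: "(\<Sum>i<N. rho / 2 * (norm (x i - y i))\<^sup>2) \<le> B"
    and step: "Dx - Dy + B \<le> eta * (theta * B - kappa * Dy) + eta * (\<Sum>i<N. inner (\<xi> i) (x i - p i))"
  shows "Dx \<le> (1 - eta * kappa) * Dy + eta\<^sup>2 / rho * (\<Sum>i<N. (norm (\<xi> i))\<^sup>2)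
                + eta * (\<Sum>i<N. inner (\<xi> i) (y i - p i))"
proof -
  define A where "A = (\<Sum>i<N. rho / 4 * (norm (x i - y i))\<^sup>2)"
  define Q where "Q = eta\<^sup>2 / rho * (\<Sum>i<N. (norm (\<xi> i))\<^sup>2)"
  define S1 where "S1 = (\<Sum>i<N. inner (\<xi> i) (x i - y i))"
  define S2 where "S2 = (\<Sum>i<N. inner (\<xi> i) (y i - p i))"
  have A: "2 * A \<le> B"
    using B by (simp add: A_def sum_distrib_left)
  moreover have "0 \<le> A"
    unfolding A_def using rho by (intro sum_nonneg) simp
  ultimately have "eta * theta * B \<le> 1 / 2 * B"
    by (intro mult_right_mono[OF eta(2)]) simp
  \<comment> \<open>Split x - p = (x - y) + (y - p) and absorb the first part into B by Young's inequality.\<close>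
  moreover have "eta * S1 \<le> A + Q"
    unfolding A_def Q_def S1_def sum_distrib_left sum_divide_distrib sum.distrib[symmetric]
    using scaled_inner_le_young[OF rho] by (intro sum_mono) (simp add: power_divide)
  moreover have "(\<Sum>i<N. inner (\<xi> i) (x i - p i)) = S1 + S2"
    by (simp add: S1_def S2_def inner_diff_right sum.distrib[symmetric])
  moreover have "eta * (theta * B - kappa * Dy) = eta * theta * B - eta * kappa * Dy"
    by (simp add: algebra_simps)
  ultimately show ?thesis
    using step A unfolding Q_def[symmetric] S2_def[symmetric] by (simp add: algebra_simps)
qed

lemma ln_diff_ge:
  fixes a b :: real
  assumes "0 < a" "a \<le> b"
  shows "(b - a) / b \<le> ln b - ln a"
proof -
  have "ln (a / b) \<le> a / b - 1" using assms by (intro ln_le_minus_one) simp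
  with assms show ?thesis by (simp add: ln_div diff_divide_distrib)
qed

lemma sum_inverse_affine_le_ln:
  fixes kappa theta :: real
  assumes "kappa > 0" "theta > 0"
  shows "(\<Sum>r\<le>t. 1 / (kappa * real r + 2 * theta))
           \<le> 1 / kappa * ln (kappa / (2 * theta) * real t + 1) + 1 / (2 * theta)"
proof (induction t)
  case 0
  then show ?case by simp
next
  case (Suc t)
  define a where "a = kappa * real t + 2 * theta"
  have a: "0 < a" using assms by (simp add: a_def add_nonneg_pos)
  have "kappa / (2 * theta) * real t + 1 = a / (2 * theta)"
    and "kappa / (2 * theta) * real (Suc t) + 1 = (a + kappa) / (2 * theta)"
    using assms by (simp_all add: a_def field_simps)
  then have ln_a: "ln (kappa / (2 * theta) * real t + 1) = ln a - ln (2 * theta)"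
    and ln_b: "ln (kappa / (2 * theta) * real (Suc t) + 1) = ln (a + kappa) - ln (2 * theta)"
    using assms a by (simp_all add: ln_div)
  have "1 / (a + kappa) \<le> 1 / kappa * (ln (a + kappa) - ln a)"
    using ln_diff_ge[of a "a + kappa"] a assms by (simp add: field_simps)
  then have "(\<Sum>r\<le>Suc t. 1 / (kappa * real r + 2 * theta))
      \<le> (1 / kappa * ln (kappa / (2 * theta) * real t + 1) + 1 / (2 * theta))
         + 1 / kappa * (ln (a + kappa) - ln a)"
    using Suc by (simp add: a_def algebra_simps)
  also have "\<dots> = 1 / kappa * ln (kappa / (2 * theta) * real (Suc t) + 1) + 1 / (2 * theta)"
    unfolding ln_a ln_b by (simp add: algebra_simps)
  finally show ?case .
qed

lemma affine_recursion_bound: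
  fixes kappa theta K D0 :: real and e :: "nat \<Rightarrow> real"
  assumes kappa: "kappa > 0" and theta: "theta > kappa" and K: "K \<ge> 0"
    and e0: "e 0 \<le> D0"
    and e_Suc: "\<And>s. e (Suc s) \<le> (1 - kappa / (kappa * real s + 2 * theta)) * e s
                                  + K / (kappa * real s + 2 * theta)\<^sup>2"
  shows "e (Suc t) \<le> (2 * theta - kappa) / (kappa * real t + 2 * theta) * D0
           + K / (kappa * real t + 2 * theta) * (1 / kappa * ln (kappa / (2 * theta) * real t + 1) + 1 / (2 * theta))"
proof -
  define a where "a = (\<lambda>s::nat. kappa * real s + 2 * theta)"
  have a_pos: "0 < a s" for s
    using kappa theta by (simp add: a_def add_nonneg_pos)
  \<comment> \<open>Multiplying by a s turns the recursion into a telescoping one, as a s - kappa = a (s - 1).\<close>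
  have weighted: "a s * e (Suc s) \<le> (a s - kappa) * e s + K / a s" for s
  proof -
    have "a s * e (Suc s) \<le> a s * ((1 - kappa / a s) * e s + K / (a s)\<^sup>2)"
      using e_Suc[of s] a_pos[of s] by (simp add: a_def)
    also have "\<dots> = (a s - kappa) * e s + K / a s"
      using a_pos[of s] by (simp add: field_simps power2_eq_square)
    finally show ?thesis .
  qed
  have "a t * e (Suc t) \<le> (2 * theta - kappa) * D0 + K * (\<Sum>r\<le>t. 1 / a r)"
  proof (induction t)
    case 0
    have "(2 * theta - kappa) * e 0 \<le> (2 * theta - kappa) * D0"
      using e0 theta kappa by (intro mult_left_mono) auto
    with weighted[of 0] show ?case by (simp add: a_def)
  next
    case (Suc t)
    have "a (Suc t) - kappa = a t" by (simp add: a_def algebra_simps)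
    with weighted[of "Suc t"] Suc show ?case by (simp add: distrib_left)
  qed
  also have "\<dots> \<le> (2 * theta - kappa) * D0
                 + K * (1 / kappa * ln (kappa / (2 * theta) * real t + 1) + 1 / (2 * theta))"
    using sum_inverse_affine_le_ln[of kappa theta t] kappa theta K
    by (simp add: a_def mult_left_mono)
  finally have "e (Suc t) \<le> ((2 * theta - kappa) * D0
      + K * (1 / kappa * ln (kappa / (2 * theta) * real t + 1) + 1 / (2 * theta))) / a t"
    using a_pos[of t] by (simp add: le_divide_eq mult.commute)
  then show ?thesis
    by (simp add: a_def add_divide_distrib)
qed

context prob_space
begin

lemma sigma_finite_subalgebra_of_subalgebra:
  assumes "subalgebra M F"
  shows "sigma_finite_subalgebra M F"
  by (intro finite_measure_subalgebra_is_sigma_finite)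
    (simp add: finite_measure_subalgebra_def finite_measure_subalgebra_axioms_def assms finite_measure_axioms)

lemma integral_le_of_nn_cond_exp_le:
  fixes f :: "'a \<Rightarrow> real"
  assumes F: "subalgebra M F" and f[measurable]: "f \<in> borel_measurable M"
    and f_nonneg: "\<And>\<omega>. \<omega> \<in> space M \<Longrightarrow> 0 \<le> f \<omega>" and c: "0 \<le> c"
    and cond_exp: "AE \<omega> in M. nn_cond_exp M F (\<lambda>\<omega>. ennreal (f \<omega>)) \<omega> \<le> ennreal c"
  shows "integrable M f" "integral\<^sup>L M f \<le> c"
proof -
  interpret sigma_finite_subalgebra M F
    using sigma_finite_subalgebra_of_subalgebra[OF F] .
  have "(\<integral>\<^sup>+\<omega>. ennreal (f \<omega>) \<partial>M) = (\<integral>\<^sup>+\<omega>. 1 * nn_cond_exp M F (\<lambda>\<omega>. ennreal (f \<omega>)) \<omega> \<partial>M)"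
    by (subst nn_cond_exp_intg) simp_all
  also have "\<dots> \<le> (\<integral>\<^sup>+\<omega>. ennreal c \<partial>M)"
    using cond_exp by (intro nn_integral_mono_AE) auto
  finally have le: "(\<integral>\<^sup>+\<omega>. ennreal (f \<omega>) \<partial>M) \<le> ennreal c"
    by (simp add: emeasure_space_1)
  then show int: "integrable M f"
    using f_nonneg by (intro integrableI_nonneg) (auto simp: order_le_less_trans)
  have "ennreal (integral\<^sup>L M f) \<le> ennreal c"
    using le f_nonneg by (subst nn_integral_eq_integral[symmetric, OF int]) auto
  then show "integral\<^sup>L M f \<le> c"
    using c by simp
qed

lemma integral_inner_eq_0_of_cond_exp_eq_0:
  fixes \<xi> h :: "'a \<Rightarrow> 'b::euclidean_space"
  assumes F: "subalgebra M F" and \<xi>[measurable]: "\<xi> \<in> borel_measurable M"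
    and sq: "integrable M (\<lambda>\<omega>. (norm (\<xi> \<omega>))\<^sup>2)"
    and mean: "\<And>b. b \<in> Basis \<Longrightarrow> AE \<omega> in M. real_cond_exp M F (\<lambda>\<omega>. inner (\<xi> \<omega>) b) \<omega> = 0"
    and h[measurable]: "h \<in> borel_measurable F" and bounded: "bounded (h ` space M)"
  shows "integrable M (\<lambda>\<omega>. inner (\<xi> \<omega>) (h \<omega>))" "(\<integral>\<omega>. inner (\<xi> \<omega>) (h \<omega>) \<partial>M) = 0"
proof -
  interpret sigma_finite_subalgebra M F
    using sigma_finite_subalgebra_of_subalgebra[OF F] .
  obtain K where K: "\<And>\<omega>. \<omega> \<in> space M \<Longrightarrow> norm (h \<omega>) \<le> K"
    using bounded unfolding bounded_iff by blast
  have [measurable]: "h \<in> borel_measurable M"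
    by (rule measurable_from_subalg[OF F h])
  have int_b: "integrable M (\<lambda>\<omega>. inner (h \<omega>) b * inner (\<xi> \<omega>) b)" if b: "b \<in> Basis" for b
  proof (rule Bochner_Integration.integrable_bound)
    show "integrable M (\<lambda>\<omega>. K * (1 + (norm (\<xi> \<omega>))\<^sup>2))"
      using sq by simp
    show "AE \<omega> in M. norm (inner (h \<omega>) b * inner (\<xi> \<omega>) b) \<le> norm (K * (1 + (norm (\<xi> \<omega>))\<^sup>2))"
    proof (rule AE_I2)
      fix \<omega> assume \<omega>: "\<omega> \<in> space M"
      have "0 \<le> (norm (\<xi> \<omega>) - 1)\<^sup>2" by simp
      then have "norm (\<xi> \<omega>) \<le> 1 + (norm (\<xi> \<omega>))\<^sup>2"
        by (simp add: power2_eq_square algebra_simps) (smt (verit) norm_ge_zero)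
      then have "\<bar>inner (\<xi> \<omega>) b\<bar> \<le> 1 + (norm (\<xi> \<omega>))\<^sup>2"
        using Basis_le_norm[OF b, of "\<xi> \<omega>"] by simp
      moreover have "\<bar>inner (h \<omega>) b\<bar> \<le> K"
        using Basis_le_norm[OF b, of "h \<omega>"] K[OF \<omega>] by simp
      ultimately show "norm (inner (h \<omega>) b * inner (\<xi> \<omega>) b) \<le> norm (K * (1 + (norm (\<xi> \<omega>))\<^sup>2))"
        by (simp add: abs_mult mult_mono')
    qed
  qed measurable
  \<comment> \<open>Pull the F-measurable factor inside the conditional expectation coordinatewise.\<close>
  have zero_b: "(\<integral>\<omega>. inner (h \<omega>) b * inner (\<xi> \<omega>) b \<partial>M) = 0" if b: "b \<in> Basis" for b
  proof -
    have "(\<integral>\<omega>. inner (h \<omega>) b * inner (\<xi> \<omega>) b \<partial>M)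
        = (\<integral>\<omega>. inner (h \<omega>) b * real_cond_exp M F (\<lambda>\<omega>. inner (\<xi> \<omega>) b) \<omega> \<partial>M)"
      by (rule real_cond_exp_intg(2)[symmetric, OF int_b[OF b]]) measurable
    also have "\<dots> = (\<integral>\<omega>. 0 \<partial>M)"
      using mean[OF b] by (intro integral_cong_AE) (measurable, auto)
    finally show ?thesis by simp
  qed
  have inner_eq: "inner (\<xi> \<omega>) (h \<omega>) = (\<Sum>b\<in>Basis. inner (h \<omega>) b * inner (\<xi> \<omega>) b)" for \<omega>
    by (subst euclidean_inner) (rule sum.cong[OF refl mult.commute])
  show "integrable M (\<lambda>\<omega>. inner (\<xi> \<omega>) (h \<omega>))"
    unfolding inner_eq by (intro Bochner_Integration.integrable_sum int_b)
  show "(\<integral>\<omega>. inner (\<xi> \<omega>) (h \<omega>) \<partial>M) = 0"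
    unfolding inner_eq by (simp add: Bochner_Integration.integral_sum int_b zero_b)
qed

lemma integral_noise_le:
  fixes \<xi> x :: "'a \<Rightarrow> nat \<Rightarrow> 'b::euclidean_space" and p :: "nat \<Rightarrow> 'b"
  assumes F: "subalgebra M F" and alpha: "0 \<le> alpha"
    and \<xi>: "\<And>i. i < N \<Longrightarrow> (\<lambda>\<omega>. \<xi> \<omega> i) \<in> borel_measurable M"
    and mean: "\<And>i b. i < N \<Longrightarrow> b \<in> Basis \<Longrightarrow>
                 AE \<omega> in M. real_cond_exp M F (\<lambda>\<omega>. inner (\<xi> \<omega> i) b) \<omega> = 0"
    and var: "\<And>i. i < N \<Longrightarrow>
                AE \<omega> in M. nn_cond_exp M F (\<lambda>\<omega>. ennreal ((norm (\<xi> \<omega> i))\<^sup>2)) \<omega> \<le> ennreal (C\<^sup>2)"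
    and x: "\<And>i. i < N \<Longrightarrow> (\<lambda>\<omega>. x \<omega> i) \<in> borel_measurable F"
    and x_in: "\<And>\<omega> i. \<omega> \<in> space M \<Longrightarrow> i < N \<Longrightarrow> x \<omega> i \<in> X i"
    and X: "\<And>i. i < N \<Longrightarrow> compact (X i)"
  shows "integrable M (\<lambda>\<omega>. alpha * (\<Sum>i<N. (norm (\<xi> \<omega> i))\<^sup>2) + beta * (\<Sum>i<N. inner (\<xi> \<omega> i) (x \<omega> i - p i)))"
    and "(\<integral>\<omega>. alpha * (\<Sum>i<N. (norm (\<xi> \<omega> i))\<^sup>2) + beta * (\<Sum>i<N. inner (\<xi> \<omega> i) (x \<omega> i - p i)) \<partial>M)
           \<le> alpha * (real N * C\<^sup>2)"
proof -
  have sq: "integrable M (\<lambda>\<omega>. (norm (\<xi> \<omega> i))\<^sup>2)" "(\<integral>\<omega>. (norm (\<xi> \<omega> i))\<^sup>2 \<partial>M) \<le> C\<^sup>2"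
    if "i < N" for i
    using integral_le_of_nn_cond_exp_le[OF F _ _ _ var] \<xi> that by simp_all
  have h_meas: "(\<lambda>\<omega>. x \<omega> i - p i) \<in> borel_measurable F" if "i < N" for i
    using x[OF that] by simp
  have h_bounded: "bounded ((\<lambda>\<omega>. x \<omega> i - p i) ` space M)" if "i < N" for i
  proof (rule bounded_subset)
    show "bounded ((\<lambda>y. y - p i) ` X i)"
      using X[OF that] by (intro bounded_translation_minus compact_imp_bounded)
    show "(\<lambda>\<omega>. x \<omega> i - p i) ` space M \<subseteq> (\<lambda>y. y - p i) ` X i"
      using x_in[OF _ that] by blast
  qed
  have inner: "integrable M (\<lambda>\<omega>. inner (\<xi> \<omega> i) (x \<omega> i - p i))" "(\<integral>\<omega>. inner (\<xi> \<omega> i) (x \<omega> i - p i) \<partial>M) = 0"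
    if "i < N" for i
    using integral_inner_eq_0_of_cond_exp_eq_0[OF F \<xi> sq(1) mean h_meas h_bounded] that by simp_all
  have "(\<integral>\<omega>. (\<Sum>i<N. (norm (\<xi> \<omega> i))\<^sup>2) \<partial>M) = (\<Sum>i<N. \<integral>\<omega>. (norm (\<xi> \<omega> i))\<^sup>2 \<partial>M)"
    using sq by (simp add: Bochner_Integration.integral_sum)
  also have "\<dots> \<le> (\<Sum>i<N. C\<^sup>2)"
    using sq by (intro sum_mono) simp
  finally have "(\<integral>\<omega>. (\<Sum>i<N. (norm (\<xi> \<omega> i))\<^sup>2) \<partial>M) \<le> real N * C\<^sup>2"
    by simp
  moreover have "(\<integral>\<omega>. (\<Sum>i<N. inner (\<xi> \<omega> i) (x \<omega> i - p i)) \<partial>M) = 0"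
    using inner by (simp add: Bochner_Integration.integral_sum)
  moreover have int_sq: "integrable M (\<lambda>\<omega>. \<Sum>i<N. (norm (\<xi> \<omega> i))\<^sup>2)"
    and int_inner: "integrable M (\<lambda>\<omega>. \<Sum>i<N. inner (\<xi> \<omega> i) (x \<omega> i - p i))"
    using sq inner by (auto intro!: Bochner_Integration.integrable_sum)
  ultimately show "(\<integral>\<omega>. alpha * (\<Sum>i<N. (norm (\<xi> \<omega> i))\<^sup>2) + beta * (\<Sum>i<N. inner (\<xi> \<omega> i) (x \<omega> i - p i)) \<partial>M)
           \<le> alpha * (real N * C\<^sup>2)"
    using alpha by (simp add: mult_left_mono)
  show "integrable M (\<lambda>\<omega>. alpha * (\<Sum>i<N. (norm (\<xi> \<omega> i))\<^sup>2) + beta * (\<Sum>i<N. inner (\<xi> \<omega> i) (x \<omega> i - p i)))"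
    using int_sq int_inner by simp
qed

end

primrec affine_iter :: "real \<Rightarrow> (nat \<Rightarrow> real) \<Rightarrow> (nat \<Rightarrow> 'a \<Rightarrow> real) \<Rightarrow> nat \<Rightarrow> 'a \<Rightarrow> real" where
  "affine_iter d c Z 0 = (\<lambda>_. d)"
| "affine_iter d c Z (Suc t) = (\<lambda>\<omega>. c t * affine_iter d c Z t \<omega> + Z t \<omega>)"

context prob_space
begin

lemma integrable_affine_iter:
  assumes "\<And>t. integrable M (Z t)"
  shows "integrable M (affine_iter d c Z t)"
  by (induction t) (simp_all add: assms)

lemma integral_affine_iter_0: "integral\<^sup>L M (affine_iter d c Z 0) = d"
  by (simp add: prob_space)

lemma integral_affine_iter_Suc:
  assumes "\<And>t. integrable M (Z t)"
  shows "integral\<^sup>L M (affine_iter d c Z (Suc t))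
           = c t * integral\<^sup>L M (affine_iter d c Z t) + integral\<^sup>L M (Z t)"
  using integrable_affine_iter[OF assms] assms by (simp add: Bochner_Integration.integral_add)

text \<open>Dominating D pathwise by the iteration avoids any measurability requirement on D itself.\<close>
lemma nn_integral_le_integral_affine_iter:
  assumes D0: "\<And>\<omega>. \<omega> \<in> space M \<Longrightarrow> D 0 \<omega> \<le> d"
    and D_nonneg: "\<And>t \<omega>. \<omega> \<in> space M \<Longrightarrow> 0 \<le> D t \<omega>"
    and c: "\<And>t. 0 \<le> c t"
    and D_Suc: "\<And>t. AE \<omega> in M. D (Suc t) \<omega> \<le> c t * D t \<omega> + Z t \<omega>"
    and Z: "\<And>t. integrable M (Z t)"
  shows "(\<integral>\<^sup>+\<omega>. ennreal (D t \<omega>) \<partial>M) \<le> ennreal (integral\<^sup>L M (affine_iter d c Z t))"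
proof -
  have le: "AE \<omega> in M. D t \<omega> \<le> affine_iter d c Z t \<omega>"
  proof (induction t)
    case 0
    show ?case using D0 by (simp add: AE_I2)
  next
    case (Suc t)
    from Suc D_Suc[of t] show ?case
    proof eventually_elim
      case (elim \<omega>)
      then show ?case using c[of t] by (simp add: order_trans[OF _ add_right_mono[OF mult_left_mono]])
    qed
  qed
  have "(\<integral>\<^sup>+\<omega>. ennreal (D t \<omega>) \<partial>M) \<le> (\<integral>\<^sup>+\<omega>. ennreal (affine_iter d c Z t \<omega>) \<partial>M)"
    using le by (intro nn_integral_mono_AE) (auto intro: ennreal_leI)
  also have "\<dots> = ennreal (integral\<^sup>L M (affine_iter d c Z t))"
  proof (rule nn_integral_eq_integral[OF integrable_affine_iter[OF Z]])
    show "AE \<omega> in M. 0 \<le> affine_iter d c Z t \<omega>"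
      using le AE_space by eventually_elim (use D_nonneg in \<open>blast intro: order_trans\<close>)
  qed
  finally show ?thesis .
qed

lemma nn_integral_le_affine_recursion_bound:
  fixes kappa theta K d :: real and D Z :: "nat \<Rightarrow> 'a \<Rightarrow> real"
  assumes kappa: "kappa > 0" and theta: "theta > kappa" and K: "K \<ge> 0"
    and D0: "\<And>\<omega>. \<omega> \<in> space M \<Longrightarrow> D 0 \<omega> \<le> d"
    and D_nonneg: "\<And>t \<omega>. \<omega> \<in> space M \<Longrightarrow> 0 \<le> D t \<omega>"
    and D_Suc: "\<And>s. AE \<omega> in M. D (Suc s) \<omega> \<le> (1 - kappa / (kappa * real s + 2 * theta)) * D s \<omega> + Z s \<omega>"
    and Z: "\<And>s. integrable M (Z s)"
    and Z_le: "\<And>s. integral\<^sup>L M (Z s) \<le> K / (kappa * real s + 2 * theta)\<^sup>2"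
  shows "(\<integral>\<^sup>+\<omega>. ennreal (D (Suc t) \<omega>) \<partial>M)
           \<le> ennreal ((2 * theta - kappa) / (kappa * real t + 2 * theta) * d
               + K / (kappa * real t + 2 * theta) * (1 / kappa * ln (kappa / (2 * theta) * real t + 1) + 1 / (2 * theta)))"
proof -
  define c where "c = (\<lambda>s::nat. 1 - kappa / (kappa * real s + 2 * theta))"
  have c_nonneg: "0 \<le> c s" for s
  proof -
    have "0 \<le> kappa * real s" using kappa by simp
    then have "0 < kappa * real s + 2 * theta" "kappa \<le> kappa * real s + 2 * theta"
      using kappa theta by linarith+
    then show ?thesis by (simp add: c_def)
  qed
  have "(\<integral>\<^sup>+\<omega>. ennreal (D (Suc t) \<omega>) \<partial>M) \<le> ennreal (integral\<^sup>L M (affine_iter d c Z (Suc t)))"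
    using D0 D_nonneg c_nonneg D_Suc Z unfolding c_def by (rule nn_integral_le_integral_affine_iter)
  also have "\<dots> \<le> ennreal ((2 * theta - kappa) / (kappa * real t + 2 * theta) * d
               + K / (kappa * real t + 2 * theta) * (1 / kappa * ln (kappa / (2 * theta) * real t + 1) + 1 / (2 * theta)))"
  proof (intro ennreal_leI affine_recursion_bound[OF kappa theta K])
    show "integral\<^sup>L M (affine_iter d c Z 0) \<le> d"
      by (simp only: integral_affine_iter_0 order.refl)
    fix s
    show "integral\<^sup>L M (affine_iter d c Z (Suc s))
        \<le> (1 - kappa / (kappa * real s + 2 * theta)) * integral\<^sup>L M (affine_iter d c Z s)
          + K / (kappa * real s + 2 * theta)\<^sup>2"
      using Z_le[of s] by (simp only: integral_affine_iter_Suc[OF Z] c_def)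
  qed
  finally show ?thesis .
qed

end

theorem lemma5:
  fixes M :: "'w measure"
    and F :: "nat \<Rightarrow> 'w measure"
    and N :: nat
    and X :: "nat \<Rightarrow> 'a::euclidean_space set"
    and psi :: "nat \<Rightarrow> 'a \<Rightarrow> real"
    and g :: "nat \<Rightarrow> 'a \<Rightarrow> 'a"
    and rho theta kappa C :: real
    and p pi0 :: "nat \<Rightarrow> 'a"
    and \<pi> :: "nat \<Rightarrow> 'w \<Rightarrow> nat \<Rightarrow> 'a"
    and \<xi> :: "nat \<Rightarrow> 'w \<Rightarrow> nat \<Rightarrow> 'a"
  assumes M: "prob_space M"
    and filt: "filtration (space M) F"
    and subalg: "\<And>t. subalgebra M (F t)"
    and X: "\<And>i. i < N \<Longrightarrow> X i \<noteq> {} \<and> compact (X i) \<and> convex (X i)"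
    and rho: "rho > 0"
    and grad: "\<And>i y. i < N \<Longrightarrow> y \<in> X i \<Longrightarrow>
                 (psi i has_derivative (\<lambda>h. inner (g i y) h)) (at y within X i)"
    and sconv: "\<And>i. i < N \<Longrightarrow> strongly_convex_on_wrt rho (X i) (psi i)"
    and kappa: "kappa > 0" and theta: "theta > kappa"
    and p: "\<And>i. i < N \<Longrightarrow> p i \<in> X i"
    and pi_in: "\<And>t \<omega> i. \<omega> \<in> space M \<Longrightarrow> i < N \<Longrightarrow> \<pi> t \<omega> i \<in> X i"
    and pi_adapted: "\<And>t i. i < N \<Longrightarrow> (\<lambda>\<omega>. \<pi> t \<omega> i) \<in> borel_measurable (F t)"
    and pi0: "\<And>\<omega>. \<omega> \<in> space M \<Longrightarrow> \<pi> 0 \<omega> = pi0"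
    and xi_meas: "\<And>t i. i < N \<Longrightarrow> (\<lambda>\<omega>. \<xi> t \<omega> i) \<in> borel_measurable M"
    and xi_mean: "\<And>t i b. i < N \<Longrightarrow> b \<in> Basis \<Longrightarrow>
                   AE \<omega> in M. real_cond_exp M (F t) (\<lambda>\<omega>. inner (\<xi> t \<omega> i) b) \<omega> = 0"
    and xi_var: "\<And>t i. i < N \<Longrightarrow>
                   AE \<omega> in M. nn_cond_exp M (F t) (\<lambda>\<omega>. ennreal ((norm (\<xi> t \<omega> i))\<^sup>2)) \<omega>
                                \<le> ennreal (C\<^sup>2)"
    and step: "\<And>t. AE \<omega> in M.
       bregman_prod N psi g p (\<pi> (Suc t) \<omega>) - bregman_prod N psi g p (\<pi> t \<omega>)
         + bregman_prod N psi g (\<pi> (Suc t) \<omega>) (\<pi> t \<omega>)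
       \<le> (1 / (kappa * real t + 2 * theta)) *
            (theta * bregman_prod N psi g (\<pi> (Suc t) \<omega>) (\<pi> t \<omega>)
             - kappa * bregman_prod N psi g p (\<pi> t \<omega>))
         + (1 / (kappa * real t + 2 * theta)) *
            (\<Sum>i<N. inner (\<xi> t \<omega> i) (\<pi> (Suc t) \<omega> i - p i))"
  shows "\<forall>t. (\<integral>\<^sup>+ \<omega>. ennreal (bregman_prod N psi g p (\<pi> (Suc t) \<omega>)) \<partial>M)
           \<le> ennreal ((2 * theta - kappa) / (kappa * real t + 2 * theta) * bregman_prod N psi g p pi0
               + real N * C\<^sup>2 / (rho * (kappa * real t + 2 * theta))
                 * (1 / kappa * ln (kappa / (2 * theta) * real t + 1) + 1 / (2 * theta)))"
proof -
  interpret prob_space M by (rule M)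
  define a where "a = (\<lambda>s::nat. kappa * real s + 2 * theta)"
  define D where "D = (\<lambda>s \<omega>. bregman_prod N psi g p (\<pi> s \<omega>))"
  define Z where "Z = (\<lambda>s \<omega>. (1 / a s)\<^sup>2 / rho * (\<Sum>i<N. (norm (\<xi> s \<omega> i))\<^sup>2)
                             + 1 / a s * (\<Sum>i<N. inner (\<xi> s \<omega> i) (\<pi> s \<omega> i - p i)))"
  have eta: "0 \<le> 1 / a s" "1 / a s * theta \<le> 1 / 2" for s
  proof -
    have "0 \<le> kappa * real s" using kappa by simp
    then have "0 < a s" "2 * theta \<le> a s"
      using kappa theta unfolding a_def by linarith+
    then show "0 \<le> 1 / a s" "1 / a s * theta \<le> 1 / 2" by simp_all
  qed
  have bregman_ge: "(\<Sum>i<N. rho / 2 * (norm (x i - y i))\<^sup>2) \<le> bregman_prod N psi g x y"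
    if "\<And>i. i < N \<Longrightarrow> x i \<in> X i" "\<And>i. i < N \<Longrightarrow> y i \<in> X i" for x y
    by (rule bregman_prod_ge_sum_sq_norm[where X = X]) (use X grad sconv that in auto)
  have D_nonneg: "0 \<le> D s \<omega>" if "\<omega> \<in> space M" for s \<omega>
    using order_trans[OF sum_nonneg bregman_ge[of p "\<pi> s \<omega>"]] p pi_in[OF that] rho
    by (auto simp: D_def)
  have D_Suc: "AE \<omega> in M. D (Suc s) \<omega> \<le> (1 - kappa / (kappa * real s + 2 * theta)) * D s \<omega> + Z s \<omega>" for s
    using step[of s] AE_space
  proof eventually_elim
    case (elim \<omega>)
    have "D (Suc s) \<omega> \<le> (1 - 1 / a s * kappa) * D s \<omega>
          + (1 / a s)\<^sup>2 / rho * (\<Sum>i<N. (norm (\<xi> s \<omega> i))\<^sup>2)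
          + 1 / a s * (\<Sum>i<N. inner (\<xi> s \<omega> i) (\<pi> s \<omega> i - p i))"
      unfolding D_def using elim(1)
      by (intro bregman_step_contraction[OF rho eta bregman_ge]) (auto simp: a_def pi_in[OF elim(2)])
    then show ?case by (simp add: Z_def a_def)
  qed
  have Z: "integrable M (Z s)" "integral\<^sup>L M (Z s) \<le> real N * C\<^sup>2 / rho / (kappa * real s + 2 * theta)\<^sup>2" for s
    using integral_noise_le[where \<xi> = "\<xi> s" and x = "\<pi> s" and X = X and N = N and p = p
        and alpha = "(1 / a s)\<^sup>2 / rho" and beta = "1 / a s",
        OF subalg _ xi_meas xi_mean xi_var pi_adapted pi_in] X rho
    by (simp_all add: Z_def a_def power_divide mult.commute)
  show ?thesis
    using nn_integral_le_affine_recursion_bound[where K = "real N * C\<^sup>2 / rho" and d = "bregman_prod N psi g p pi0",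
        OF kappa theta _ _ D_nonneg D_Suc Z] rho
    by (simp add: D_def pi0)
qed

end
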